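(* Assume the setup below. Two multipartitions $\boldsymbol{\lambda},\boldsymbol{\mu}\in\mathcal{P}(l,n)$ satisfy $\tau_{\mathbf{r}}(w(\boldsymbol{\lambda}))_J=\tau_{\mathbf{r}}(w(\boldsymbol{\mu}))_J$ if and only if $C_{[t]}(\boldsymbol{\lambda})=C_{[t]}(\boldsymbol{\mu})$ (as multisets) for all $0\le t\le d$.
   Context: Fix positive integers $l,n$. A partition $\lambda=(\lambda_1\ge\lambda_2\ge\dots)$ has $\lambda_i=0$ for large $i$; $Y(\lambda)=\{(a,b):a\ge1,1\le b\le\lambda_a\}$; the content of $(a,b)$ is $b-a$. $\mathcal{P}(l,n)$ is the set of $l$-multipartitions $\boldsymbol{\lambda}=(\lambda^{(0)},\dots,\lambda^{(l-1)})$ of $n$. For $r\in\mathbb{Z}$, $\beta^r(\lambda)=(\lambda_i+r+1-i)_{i\ge1}$; a strictly decreasing integer sequence stabilising with respect to $r$ (i.e. $C_i=r+1-i$ for large $i$) is $\beta^r$ of a unique partition. For a strictly decreasing integer sequence $C$, $S^iC=(C_1+i,C_2+i,\dots)$. For an $l$-tuple $\mathbf{C}=(C^0,\dots,C^{l-1})$ of strictly decreasing integer sequences, $\chi(\mathbf{C})=\{l(C^q_i-1)+q+1:0\le q\le l-1,\,i\ge1\}$. A node is removable if deleting it leaves a Young diagram; for $J\subseteq\{0,\dots,l-1\}$ it is $J$-removable if removable with content congruent mod $l$ to some $j\in J$; the $J$-heart $\lambda_J$ is obtained by removing $J$-removable nodes as long as possible. Parameters: $H_1,\dots,H_{l-1}\in\mathbb{Q}$,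 $H_0=-(H_1+\dots+H_{l-1})$, $d$ a positive integer with $dH_i\in\mathbb{Z}$; $\theta=(1+H_0,H_1,\dots,H_{l-1})$. $S_l$ = permutations of $\{0,\dots,l-1\}$ generated by $s_i$ ($1\le i\le l-1$) transposing $i-1,i$, acting on $\mathbb{Q}^l$ by: $s_i\cdot\theta$ has entry $\theta_{i-1}+\theta_i$ at $i-1$, $-\theta_i$ at $i$, $\theta_i+\theta_{i+1}$ at $i+1$, otherwise unchanged (indices mod $l$). $R\subset\mathbb{Z}^l$ is generated by $\alpha_i=-e_{i-1}+2e_i-e_{i+1}$ (indices mod $l$); $\tilde{S}_l=R\rtimes S_l$ acts on $\{\theta\in\mathbb{Q}^l:\sum\theta_i=1\}$ with $R$ by translations; $\mathbb{Z}^l_0$ = integer vectors with coordinate sum $0$; $\phi(\mathbf{r})=\sum_j(r_{j-1}-r_j)e_j$ (indices mod $l$). Fix $w_\theta=\phi(\mathbf{r})w\in\tilde{S}_l$ ($\mathbf{r}\in\mathbb{Z}^l_0$, $w\in S_l$) with $\boldsymbol{\epsilon}=w_\theta\cdot\theta$ satisfying $0\le\varepsilon_i\le1$; $J=\{j:\varepsilon_j=0\}$; then $d\boldsymbol{\epsilon}\in\mathbb{Z}^l$. Let $m_i(\mathbf{c})=c_0+\dots+c_i$ and $I_t=\{p:m_p(d\boldsymbol{\epsilon})=t\}$ for $0\le t\le d$. For $\mathbf{s}\in\mathbb{Z}^l$ with $s=\sum s_i$, $\tau_{\mathbf{s}}(\boldsymbol{\lambda})$ is the partition whose $s$-shifted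 $\beta$-number is $\chi(\beta^{s_0}(\lambda^{(0)}),\dots,\beta^{s_{l-1}}(\lambda^{(l-1)}))$ arranged decreasingly; $w(\boldsymbol{\lambda})$ has $p$-th component $\lambda^{(w^{-1}(p))}$. Put $C^p(\boldsymbol{\lambda})=\beta^{r_p}(\lambda^{(w^{-1}(p))})$; for $1\le t\le d-1$, $C_{[t]}(\boldsymbol{\lambda})=\biguplus_{p\in I_t}C^p(\boldsymbol{\lambda})$ (multiset union) and $C_{[0]}(\boldsymbol{\lambda})=C_{[d]}(\boldsymbol{\lambda})=\biguplus_{p\in I_0}S^{-1}C^p(\boldsymbol{\lambda})\uplus\biguplus_{p\in I_d}C^p(\boldsymbol{\lambda})$. *)

theory Defs
  imports Complex_Main
begin

text \<open>A partition is a 1-indexed sequence lam 1 >= lam 2 >= ... of naturals,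
  eventually zero; the (unused) value at index 0 is normalised to 0.\<close>
definition is_partition :: "(nat \<Rightarrow> nat) \<Rightarrow> bool" where
  "is_partition lam \<longleftrightarrow> lam 0 = 0 \<and> (\<forall>i\<ge>1. lam (Suc i) \<le> lam i) \<and> finite {i. lam i \<noteq> 0}"

definition psize :: "(nat \<Rightarrow> nat) \<Rightarrow> nat" where
  "psize lam = sum lam {i. lam i \<noteq> 0}"

definition young :: "(nat \<Rightarrow> nat) \<Rightarrow> (nat \<times> nat) set" where
  "young lam = {(a, b). 1 \<le> a \<and> 1 \<le> b \<and> b \<le> lam a}"

definition content :: "nat \<times> nat \<Rightarrow> int" where
  "content x = int (snd x) - int (fst x)"

definition multipartitions :: "nat \<Rightarrow> nat \<Rightarrow> (nat \<Rightarrow> nat) list set" where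
  "multipartitions l n = {lams. length lams = l \<and> (\<forall>q<l. is_partition (lams ! q))
        \<and> (\<Sum>q<l. psize (lams ! q)) = n}"

definition removable :: "(nat \<Rightarrow> nat) \<Rightarrow> nat \<times> nat \<Rightarrow> bool" where
  "removable lam x \<longleftrightarrow> x \<in> young lam \<and> (\<exists>mu. is_partition mu \<and> young mu = young lam - {x})"

definition J_removable :: "nat \<Rightarrow> nat set \<Rightarrow> (nat \<Rightarrow> nat) \<Rightarrow> nat \<times> nat \<Rightarrow> bool" where
  "J_removable l J lam x \<longleftrightarrow> removable lam x \<and> (\<exists>j\<in>J. content x mod int l = int j mod int l)"

definition heart_step :: "nat \<Rightarrow> nat set \<Rightarrow> (nat \<Rightarrow> nat) \<Rightarrow> (nat \<Rightarrow> nat) \<Rightarrow> bool" where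
  "heart_step l J lam mu \<longleftrightarrow> is_partition mu \<and> (\<exists>x. J_removable l J lam x \<and> young mu = young lam - {x})"

definition heart :: "nat \<Rightarrow> nat set \<Rightarrow> (nat \<Rightarrow> nat) \<Rightarrow> (nat \<Rightarrow> nat)" where
  "heart l J lam = (THE mu. (heart_step l J)\<^sup>*\<^sup>* lam mu \<and> \<not> (\<exists>x. J_removable l J mu x))"

definition beta :: "int \<Rightarrow> (nat \<Rightarrow> nat) \<Rightarrow> nat \<Rightarrow> int" where
  "beta r lam i = int (lam i) + r + 1 - int i"

definition beta_set :: "int \<Rightarrow> (nat \<Rightarrow> nat) \<Rightarrow> int set" where
  "beta_set r lam = {beta r lam i | i. 1 \<le> i}"

text \<open>tau_s(lams): the partition whose (sum s)-shifted beta-sequence is chi(...) arranged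
  decreasingly, i.e. whose set of beta-numbers equals the set chi(...).\<close>
definition tau :: "nat \<Rightarrow> (nat \<Rightarrow> int) \<Rightarrow> (nat \<Rightarrow> nat) list \<Rightarrow> (nat \<Rightarrow> nat)" where
  "tau l s lams = (THE mu. is_partition mu \<and>
      beta_set (\<Sum>q<l. s q) mu =
        {int l * (c - 1) + int q + 1 | q c. q < l \<and> c \<in> beta_set (s q) (lams ! q)})"

definition swp :: "nat \<Rightarrow> nat \<Rightarrow> nat \<Rightarrow> nat" where
  "swp a b x = (if x = a then b else if x = b then a else x)"

text \<open>The permutation s_{i1} o ... o s_{ik} given by a word ws = [i1,...,ik], s_i = (i-1 i).\<close>
definition wperm :: "nat list \<Rightarrow> nat \<Rightarrow> nat" where
  "wperm ws = foldr (\<lambda>i f. swp (i - 1) i \<circ> f) ws id"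

definition wmp :: "nat list \<Rightarrow> (nat \<Rightarrow> nat) list \<Rightarrow> (nat \<Rightarrow> nat) list" where
  "wmp ws lams = map (\<lambda>p. lams ! (inv (wperm ws) p)) [0..<length lams]"

definition alpha :: "nat \<Rightarrow> nat \<Rightarrow> nat \<Rightarrow> rat" where
  "alpha l i j = (if j = i then 2 else 0) - (if j = (i + l - 1) mod l then 1 else 0)
                 - (if j = (i + 1) mod l then 1 else 0)"

definition sact :: "nat \<Rightarrow> nat \<Rightarrow> (nat \<Rightarrow> rat) \<Rightarrow> (nat \<Rightarrow> rat)" where
  "sact l i th = (\<lambda>j. th j - th i * alpha l i j)"

definition wact :: "nat \<Rightarrow> nat list \<Rightarrow> (nat \<Rightarrow> rat) \<Rightarrow> (nat \<Rightarrow> rat)" where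
  "wact l ws th = foldr (sact l) ws th"

definition phi :: "nat \<Rightarrow> (nat \<Rightarrow> int) \<Rightarrow> nat \<Rightarrow> rat" where
  "phi l r j = of_int (r ((j + l - 1) mod l) - r j)"

definition theta :: "nat \<Rightarrow> (nat \<Rightarrow> rat) \<Rightarrow> nat \<Rightarrow> rat" where
  "theta l H j = (if j = 0 then 1 - (\<Sum>i\<in>{1..<l}. H i) else H j)"

definition eps :: "nat \<Rightarrow> (nat \<Rightarrow> rat) \<Rightarrow> (nat \<Rightarrow> int) \<Rightarrow> nat list \<Rightarrow> nat \<Rightarrow> rat" where
  "eps l H r ws j = phi l r j + wact l ws (theta l H) j"

definition Jset :: "nat \<Rightarrow> (nat \<Rightarrow> rat) \<Rightarrow> (nat \<Rightarrow> int) \<Rightarrow> nat list \<Rightarrow> nat set" where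
  "Jset l H r ws = {j. j < l \<and> eps l H r ws j = 0}"

definition Iset :: "nat \<Rightarrow> nat \<Rightarrow> (nat \<Rightarrow> rat) \<Rightarrow> (nat \<Rightarrow> int) \<Rightarrow> nat list \<Rightarrow> nat \<Rightarrow> nat set" where
  "Iset l d H r ws t = {p. p < l \<and> (\<Sum>i\<le>p. of_nat d * eps l H r ws i) = of_nat t}"

definition Cp :: "nat list \<Rightarrow> (nat \<Rightarrow> int) \<Rightarrow> (nat \<Rightarrow> nat) list \<Rightarrow> nat \<Rightarrow> int set" where
  "Cp ws r lams p = beta_set (r p) (lams ! (inv (wperm ws) p))"

text \<open>C_[t](lams) as a multiset of integers, represented by its multiplicity function.\<close>
definition Cmult :: "nat \<Rightarrow> nat \<Rightarrow> (nat \<Rightarrow> rat) \<Rightarrow> (nat \<Rightarrow> int) \<Rightarrow> nat list \<Rightarrow> nat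
      \<Rightarrow> (nat \<Rightarrow> nat) list \<Rightarrow> int \<Rightarrow> nat" where
  "Cmult l d H r ws t lams = (\<lambda>x.
     if 1 \<le> t \<and> t \<le> d - 1 then card {p \<in> Iset l d H r ws t. x \<in> Cp ws r lams p}
     else card {p \<in> Iset l d H r ws 0. x + 1 \<in> Cp ws r lams p}
          + card {p \<in> Iset l d H r ws d. x \<in> Cp ws r lams p})"

end

theory Submission
  imports Defs
begin

(* A partition is identified with its set of 0-shifted beta-numbers, and the
   corollary is turned into a statement about integer sets.
   (1) Beta sets determine partitions; conversely a set X of integers containing every
       integer up to some a, with finitely many elements above a, namely s - a of them,
       is the s-shifted beta set of a partition.  Removing a node of content c replaces
       the beta-number c + 1 by c.
   (2) Let kap : int => int be a "charge": weakly increasing, with finite fibres, and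
       constant across the step x - 1 -> x exactly when x - 1 is congruent to an element
       of J.  Then two partitions have the same J-heart iff their beta sets meet every
       fibre of kap in equally many points: node removals preserve these counts, and the
       beta set of a heart is the unique set with the given counts that is closed under
       the steps x -> x - 1 within a fibre.
   (3) Under the hypotheses of the corollary, kap (l*c + q + 1) = d*c + m_q(d eps) is a
       charge for J = {j. eps_j = 0}.
   (4) The beta set of tau_r(w(lam)) is chi of the sets C^p(lam), and the fibre of kap
       over d*(x-1) + t collects exactly the copies of x in C_[t](lam) (t = d covers
       C_[0] = C_[d] as well).  Hence equal fibre counts mean equal multisets C_[t]. *)

section \<open>Beta-numbers of partitions\<close>

lemma partition_mono:
  assumes "is_partition lam" "1 \<le> i" "i \<le> j"
  shows "lam j \<le> lam i"
  using assms(3,2)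
proof (induction j rule: dec_induct)
  case (step k)
  then show ?case using assms(1) unfolding is_partition_def by (meson le_trans order.trans)
qed simp

lemma beta_strict:
  assumes "is_partition lam" "1 \<le> i" "i < j"
  shows "beta r lam j < beta r lam i"
  using partition_mono[OF assms(1,2), of j] assms(3) unfolding beta_def by simp

lemma beta_inj:
  assumes "is_partition lam" "1 \<le> i" "1 \<le> j" "beta r lam i = beta r lam j"
  shows "i = j"
  using beta_strict[OF assms(1,2), of j r] beta_strict[OF assms(1,3), of i r] assms(4)
  by (cases i j rule: linorder_cases) auto

lemma beta_inj_on: "is_partition lam \<Longrightarrow> inj_on (beta r lam) {1..}"
  using beta_inj by (auto simp: inj_on_def)

lemma mem_beta_set: "x \<in> beta_set r lam \<longleftrightarrow> (\<exists>i\<ge>1. x = beta r lam i)"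
  unfolding beta_set_def by auto

lemma card_beta_above:
  assumes lam: "is_partition lam" and i: "1 \<le> i"
  shows "card {y \<in> beta_set r lam. beta r lam i < y} = i - 1"
proof -
  have "{y \<in> beta_set r lam. beta r lam i < y} = beta r lam ` {1..<i}"
  proof (intro equalityI subsetI)
    fix y assume "y \<in> {y \<in> beta_set r lam. beta r lam i < y}"
    then obtain j where j: "1 \<le> j" "y = beta r lam j" "beta r lam i < y" by (auto simp: mem_beta_set)
    then have "j < i" using beta_strict[OF lam i, of j r] by (cases i j rule: linorder_cases) auto
    then show "y \<in> beta r lam ` {1..<i}" using j by auto
  qed (use beta_strict[OF lam] in \<open>auto simp: mem_beta_set\<close>)
  moreover have "inj_on (beta r lam) {1..<i}"
    using beta_inj_on[OF lam] by (rule inj_on_subset) auto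
  ultimately show ?thesis by (simp add: card_image)
qed

lemma beta_set_inj:
  assumes lam: "is_partition lam" and mu: "is_partition mu" and eq: "beta_set r lam = beta_set r mu"
  shows "lam = mu"
proof
  fix i
  show "lam i = mu i"
  proof (cases "i = 0")
    case True then show ?thesis using lam mu unfolding is_partition_def by simp
  next
    case False
    then have i: "1 \<le> i" by simp
    then have "beta r lam i \<in> beta_set r lam" unfolding mem_beta_set by blast
    then have "beta r lam i \<in> beta_set r mu" using eq by simp
    then obtain j where j: "1 \<le> j" "beta r lam i = beta r mu j" by (auto simp: mem_beta_set)
    have "i - 1 = j - 1"
      using card_beta_above[OF lam i, of r] card_beta_above[OF mu j(1), of r] eq j(2) by simp
    then have "i = j" using i j by simp
    then show ?thesis using j unfolding beta_def by simp
  qed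
qed

lemma partition_update:
  assumes lam: "is_partition lam" and a: "1 \<le> a" and below: "lam (Suc a) \<le> v"
    and above: "2 \<le> a \<Longrightarrow> v \<le> lam (a - 1)"
  shows "is_partition (lam(a := v))"
  unfolding is_partition_def
proof (intro conjI allI impI)
  show "(lam(a := v)) 0 = 0" using lam a unfolding is_partition_def by auto
next
  fix i :: nat assume "1 \<le> i"
  then show "(lam(a := v)) (Suc i) \<le> (lam(a := v)) i"
    using lam below above unfolding is_partition_def
    by (cases "Suc i = a"; cases "i = a") (auto simp: Suc_diff_Suc)
next
  have "{i. (lam(a := v)) i \<noteq> 0} \<subseteq> insert a {i. lam i \<noteq> 0}" by auto
  then show "finite {i. (lam(a := v)) i \<noteq> 0}"
    using lam unfolding is_partition_def by (meson finite_insert finite_subset)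
qed

lemma beta_set_update:
  assumes lam: "is_partition lam" and a: "1 \<le> a"
  shows "beta_set s (lam(a := v)) = insert (int v + s + 1 - int a) (beta_set s lam - {beta s lam a})"
proof -
  have b: "beta s (lam(a := v)) i = (if i = a then int v + s + 1 - int a else beta s lam i)" for i
    unfolding beta_def by simp
  have other: "beta s lam i \<noteq> beta s lam a" if "1 \<le> i" "i \<noteq> a" for i
    using beta_inj[OF lam that(1) a] that(2) by blast
  show ?thesis
  proof (intro equalityI subsetI)
    fix x assume "x \<in> beta_set s (lam(a := v))"
    then obtain i where "1 \<le> i" "x = beta s (lam(a := v)) i" by (auto simp: mem_beta_set)
    then show "x \<in> insert (int v + s + 1 - int a) (beta_set s lam - {beta s lam a})"
      using other by (cases "i = a") (auto simp: b mem_beta_set)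
  next
    fix x assume x: "x \<in> insert (int v + s + 1 - int a) (beta_set s lam - {beta s lam a})"
    show "x \<in> beta_set s (lam(a := v))"
    proof (cases "x = int v + s + 1 - int a")
      case True then show ?thesis using a b[of a] by (auto simp: mem_beta_set)
    next
      case False
      then obtain i where "1 \<le> i" "x = beta s lam i" "i \<noteq> a" using x by (auto simp: mem_beta_set)
      then show ?thesis using b[of i] by (auto simp: mem_beta_set)
    qed
  qed
qed

lemma beta_set_raise:
  assumes lam: "is_partition lam" and y: "y \<in> beta_set s lam" and y1: "y + 1 \<notin> beta_set s lam"
  shows "\<exists>lam'. is_partition lam' \<and> beta_set s lam' = insert (y + 1) (beta_set s lam - {y})"
proof -
  obtain a where a: "1 \<le> a" "y = beta s lam a" using y by (auto simp: mem_beta_set)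
  have "Suc (lam a) \<le> lam (a - 1)" if "2 \<le> a"
  proof -
    have "beta s lam (a - 1) \<in> beta_set s lam"
      unfolding mem_beta_set using that by (intro exI[of _ "a - 1"]) simp
    then have "beta s lam (a - 1) \<noteq> y + 1" using y1 by auto
    moreover have "y < beta s lam (a - 1)" using beta_strict[OF lam, of "a - 1" a s] a that by simp
    ultimately show ?thesis using a that unfolding beta_def by (simp add: of_nat_diff)
  qed
  moreover have "lam (Suc a) \<le> Suc (lam a)" using partition_mono[OF lam a(1), of "Suc a"] by simp
  ultimately have "is_partition (lam(a := Suc (lam a)))" using partition_update[OF lam a(1)] by blast
  moreover have raised: "int (Suc (lam a)) + s + 1 - int a = y + 1" using a unfolding beta_def by simp
  have "beta_set s (lam(a := Suc (lam a))) = insert (y + 1) (beta_set s lam - {y})"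
    using beta_set_update[OF lam a(1), of s "Suc (lam a)"] unfolding raised a(2)[symmetric] .
  ultimately show ?thesis by blast
qed

definition beta_like :: "int \<Rightarrow> int set \<Rightarrow> int \<Rightarrow> bool" where
  "beta_like s X a \<longleftrightarrow> {..a} \<subseteq> X \<and> finite (X \<inter> {a<..}) \<and> int (card (X \<inter> {a<..})) = s - a"

lemma beta_set_beta_like:
  assumes lam: "is_partition lam"
  shows "\<exists>A. \<forall>a\<le>A. beta_like r (beta_set r lam) a"
proof -
  obtain k where k: "{i. lam i \<noteq> 0} \<subseteq> {..<k}"
    using lam unfolding is_partition_def by (auto simp: finite_nat_set_iff_bounded)
  have zero: "k \<le> i \<Longrightarrow> lam i = 0" for i using k by force
  have "beta_like r (beta_set r lam) a" if a: "a \<le> r - int k" for a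
    unfolding beta_like_def
  proof (intro conjI)
    show "{..a} \<subseteq> beta_set r lam"
    proof
      fix x assume "x \<in> {..a}"
      then have "k \<le> nat (r + 1 - x)" "1 \<le> nat (r + 1 - x)" "x = beta r lam (nat (r + 1 - x))"
        using a zero[of "nat (r + 1 - x)"] unfolding beta_def by auto
      then show "x \<in> beta_set r lam" unfolding mem_beta_set by blast
    qed
    have top: "beta_set r lam \<inter> {a<..} = beta r lam ` {1..nat (r - a)}"
    proof (intro equalityI subsetI)
      fix x assume "x \<in> beta_set r lam \<inter> {a<..}"
      then obtain i where i: "1 \<le> i" "x = beta r lam i" "a < x" by (auto simp: mem_beta_set)
      have "i \<le> nat (r - a)"
      proof (rule ccontr)
        assume "\<not> i \<le> nat (r - a)"
        then have "beta r lam i \<le> a" using zero[of i] a unfolding beta_def by simp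
        then show False using i by simp
      qed
      then show "x \<in> beta r lam ` {1..nat (r - a)}" using i by auto
    qed (auto simp: mem_beta_set beta_def)
    then show "finite (beta_set r lam \<inter> {a<..})" by simp
    have "inj_on (beta r lam) {1..nat (r - a)}"
      using beta_inj_on[OF lam] by (rule inj_on_subset) auto
    then show "int (card (beta_set r lam \<inter> {a<..})) = r - a" using top a by (simp add: card_image)
  qed
  then show ?thesis by blast
qed

lemma down_closed_below:
  fixes X :: "int set"
  assumes closed: "\<forall>x\<in>X. x - 1 \<in> X" and x: "x \<in> X" and zx: "z \<le> x"
  shows "z \<in> X"
proof -
  have "x - int k \<in> X" for k
    by (induction k) (use closed x in \<open>auto simp: algebra_simps\<close>)
  from this[of "nat (x - z)"] show ?thesis using zx by simp
qed

lemma empty_partition: "is_partition (\<lambda>_. 0) \<and> beta_set s (\<lambda>_. 0) = {..s}"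
proof -
  have "x \<in> beta_set s (\<lambda>_. 0) \<longleftrightarrow> x \<le> s" for x
  proof
    assume "x \<in> beta_set s (\<lambda>_. 0)"
    then show "x \<le> s" unfolding mem_beta_set beta_def by auto
  next
    assume "x \<le> s"
    then have "1 \<le> nat (s + 1 - x)" "x = beta s (\<lambda>_. 0) (nat (s + 1 - x))" unfolding beta_def by auto
    then show "x \<in> beta_set s (\<lambda>_. 0)" unfolding mem_beta_set by blast
  qed
  then show ?thesis unfolding is_partition_def by auto
qed

lemma beta_like_down_closed:
  assumes like: "beta_like s X a" and closed: "\<forall>x\<in>X. x - 1 \<in> X"
  shows "X = {..s}"
proof -
  have low: "{..a} \<subseteq> X" and fin: "finite (X \<inter> {a<..})" and c: "int (card (X \<inter> {a<..})) = s - a"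
    using like unfolding beta_like_def by auto
  have "X \<inter> {a..} = insert a (X \<inter> {a<..})" using low by auto
  then have fin_a: "finite (X \<inter> {a..})" and a_in: "a \<in> X \<inter> {a..}" using fin by auto
  define m where "m = Max (X \<inter> {a..})"
  have m: "m \<in> X" "a \<le> m"
    using Max_in[OF fin_a] Max_ge[OF fin_a a_in] a_in unfolding m_def by auto
  have X: "X = {..m}"
  proof
    show "X \<subseteq> {..m}"
    proof
      fix x assume "x \<in> X"
      then show "x \<in> {..m}" using Max_ge[OF fin_a, of x] m(2) unfolding m_def by (cases "a \<le> x") auto
    qed
    show "{..m} \<subseteq> X" using down_closed_below[OF closed m(1)] by auto
  qed
  then have "X \<inter> {a<..} = {a<..m}" by auto
  then have "int (card (X \<inter> {a<..})) = m - a" using m(2) by simp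
  then show ?thesis using X c by simp
qed

text \<open>Every beta-like set is a beta set: lower elements x with x - 1 missing one at a time
  (each step lowers the total displacement above a) until the set is down-closed, then
  raise them back one node at a time.\<close>
lemma beta_like_beta_set:
  assumes "beta_like s X a"
  shows "\<exists>lam. is_partition lam \<and> beta_set s lam = X"
  using assms
proof (induction "\<Sum>x\<in>X \<inter> {a<..}. nat (x - a)" arbitrary: X rule: less_induct)
  case less
  then have low: "{..a} \<subseteq> X" and fin: "finite (X \<inter> {a<..})" and c: "int (card (X \<inter> {a<..})) = s - a"
    unfolding beta_like_def by auto
  show ?case
  proof (cases "\<forall>x\<in>X. x - 1 \<in> X")
    case True
    then show ?thesis using beta_like_down_closed[OF less.prems] empty_partition by metis
  next
    case False
    then obtain x where x: "x \<in> X" "x - 1 \<notin> X" by blast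
    then have xa: "a < x - 1" using low by (meson atMost_iff not_less subsetD)
    define X' where "X' = insert (x - 1) (X - {x})"
    have X'top: "X' \<inter> {a<..} = insert (x - 1) ((X \<inter> {a<..}) - {x})" using xa unfolding X'_def by auto
    have xtop: "x \<in> X \<inter> {a<..}" using x xa by auto
    have "card (X' \<inter> {a<..}) = Suc (card ((X \<inter> {a<..}) - {x}))"
      using fin x(2) unfolding X'top by (simp add: card_insert_if)
    also have "\<dots> = card (X \<inter> {a<..})" by (rule card_Suc_Diff1[OF fin xtop])
    finally have "card (X' \<inter> {a<..}) = card (X \<inter> {a<..})" .
    then have like': "beta_like s X' a"
      using low fin c xa unfolding beta_like_def X'top by (auto simp: X'_def)
    let ?w = "\<lambda>y. nat (y - a)"
    have "sum ?w (X \<inter> {a<..}) = ?w x + sum ?w ((X \<inter> {a<..}) - {x})"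
      by (rule sum.remove[OF fin xtop])
    moreover have "sum ?w (X' \<inter> {a<..}) = ?w (x - 1) + sum ?w ((X \<inter> {a<..}) - {x})"
      unfolding X'top using fin x(2) by (simp add: sum.insert)
    ultimately have "sum ?w (X' \<inter> {a<..}) < sum ?w (X \<inter> {a<..})" using xa by simp
    then obtain lam' where lam': "is_partition lam'" "beta_set s lam' = X'"
      using less.hyps like' by blast
    have "x - 1 \<in> beta_set s lam'" "x - 1 + 1 \<notin> beta_set s lam'" using lam'(2) unfolding X'_def by auto
    then obtain lam where "is_partition lam" "beta_set s lam = insert (x - 1 + 1) (X' - {x - 1})"
      using beta_set_raise[OF lam'(1)] lam'(2) by metis
    moreover have "insert (x - 1 + 1) (X' - {x - 1}) = X" using x unfolding X'_def by auto
    ultimately show ?thesis by auto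
  qed
qed

section \<open>Node removal in terms of beta-numbers\<close>

definition J_residue :: "nat \<Rightarrow> nat set \<Rightarrow> int \<Rightarrow> bool" where
  "J_residue l J y \<longleftrightarrow> (\<exists>j\<in>J. y mod int l = int j mod int l)"

lemma young_mem: "(i, b) \<in> young f \<longleftrightarrow> 1 \<le> i \<and> 1 \<le> b \<and> b \<le> f i"
  unfolding young_def by auto

lemma finite_young: "is_partition lam \<Longrightarrow> finite (young lam)"
proof -
  assume lam: "is_partition lam"
  have "young lam \<subseteq> Sigma {i. lam i \<noteq> 0} (\<lambda>i. {1..lam i})" unfolding young_def by auto
  moreover have "finite (Sigma {i. lam i \<noteq> 0} (\<lambda>i. {1..lam i}))"
    using lam unfolding is_partition_def by (intro finite_SigmaI) auto
  ultimately show ?thesis by (rule finite_subset)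
qed

lemma heart_exists:
  "is_partition lam \<Longrightarrow> \<exists>mu. (heart_step l J)\<^sup>*\<^sup>* lam mu \<and> \<not> (\<exists>y. J_removable l J mu y)"
proof (induction "card (young lam)" arbitrary: lam rule: less_induct)
  case less
  show ?case
  proof (cases "\<exists>y. J_removable l J lam y")
    case True
    then obtain y mu where y: "J_removable l J lam y" "is_partition mu" "young mu = young lam - {y}"
      "y \<in> young lam" unfolding J_removable_def removable_def by blast
    then have "heart_step l J lam mu" unfolding heart_step_def by blast
    moreover have "card (young mu) < card (young lam)"
      using y finite_young[OF less.prems] by (metis card_Diff1_less)
    then obtain nu where "(heart_step l J)\<^sup>*\<^sup>* mu nu \<and> \<not> (\<exists>y. J_removable l J nu y)"
      using less y by blast
    ultimately show ?thesis by (meson converse_rtranclp_into_rtranclp)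
  qed blast
qed

lemma removed_node_row_end:
  assumes lam: "is_partition lam" and mu: "is_partition mu"
    and x: "x \<in> young lam" and Y: "young mu = young lam - {x}"
  shows "\<exists>a. 1 \<le> a \<and> x = (a, lam a) \<and> 1 \<le> lam a \<and> mu = lam(a := lam a - 1)"
proof -
  obtain a c where ac: "x = (a, c)" by (cases x)
  have a: "1 \<le> a" "1 \<le> c" "c \<le> lam a" using x ac by (auto simp: young_mem)
  have c: "c = lam a"
  proof (rule ccontr)
    assume "c \<noteq> lam a"
    then have "(a, c + 1) \<in> young mu" using Y a ac by (auto simp: young_mem)
    then have "(a, c) \<in> young mu" using a by (auto simp: young_mem)
    then show False using Y ac by auto
  qed
  have "mu i = (lam(a := lam a - 1)) i" for i
  proof (cases "i = 0")
    case True then show ?thesis using lam mu a unfolding is_partition_def by auto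
  next
    case False
    have "b \<le> mu i \<longleftrightarrow> b \<le> (lam(a := lam a - 1)) i" if "1 \<le> b" for b
    proof -
      have "b \<le> mu i \<longleftrightarrow> (i, b) \<in> young mu" using that False by (auto simp: young_mem)
      also have "\<dots> \<longleftrightarrow> (i, b) \<in> young lam \<and> (i, b) \<noteq> (a, lam a)" using Y ac c by auto
      also have "\<dots> \<longleftrightarrow> b \<le> (lam(a := lam a - 1)) i" using that False by (auto simp: young_mem)
      finally show ?thesis .
    qed
    then show ?thesis by (metis le_antisym le_refl less_one not_le not_less_eq_eq)
  qed
  then show ?thesis using a ac c by auto
qed

lemma heart_step_beta:
  assumes lam: "is_partition lam" and step: "heart_step l J lam mu"
  shows "is_partition mu \<and> (\<exists>x. x \<in> beta_set 0 lam \<and> x - 1 \<notin> beta_set 0 lam \<and> J_residue l J (x - 1)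
      \<and> beta_set 0 mu = insert (x - 1) (beta_set 0 lam - {x}))"
proof -
  obtain y where mu: "is_partition mu" and jr: "J_removable l J lam y" and Y: "young mu = young lam - {y}"
    using step unfolding heart_step_def by blast
  have "y \<in> young lam" using jr unfolding J_removable_def removable_def by blast
  then obtain a where a: "1 \<le> a" "y = (a, lam a)" "1 \<le> lam a" "mu = lam(a := lam a - 1)"
    using removed_node_row_end[OF lam mu _ Y] by blast
  define x where "x = beta 0 lam a"
  have x_in: "x \<in> beta_set 0 lam" using a unfolding x_def mem_beta_set by blast
  have "x - 1 \<noteq> beta 0 lam i" if "1 \<le> i" for i
  proof (cases i "Suc a" rule: linorder_cases)
    case less then have "i \<le> a" by simp
    then show ?thesis using partition_mono[OF lam that, of a] unfolding x_def beta_def by simp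
  next
    case equal
    have "mu (Suc a) \<le> mu a" using mu a unfolding is_partition_def by auto
    then show ?thesis using a equal unfolding x_def beta_def by (simp add: of_nat_diff)
  next
    case greater
    then show ?thesis using beta_strict[OF lam a(1), of i 0] partition_mono[OF lam, of "Suc a" i]
      mu a unfolding x_def beta_def is_partition_def by (auto simp: of_nat_diff)
  qed
  then have x_out: "x - 1 \<notin> beta_set 0 lam" unfolding mem_beta_set by blast
  have "content y = x - 1" using a unfolding x_def content_def beta_def by simp
  then have "J_residue l J (x - 1)" using jr unfolding J_removable_def J_residue_def by simp
  moreover have "beta_set 0 mu = insert (x - 1) (beta_set 0 lam - {x})"
    using beta_set_update[OF lam a(1), of 0 "lam a - 1"] a unfolding x_def beta_def
    by (simp add: of_nat_diff algebra_simps)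
  ultimately show ?thesis using mu x_in x_out by blast
qed

text \<open>Conversely, in a partition without J-removable nodes no beta-number x with x - 1 missing
  has x - 1 in a residue class of J (otherwise the end of the corresponding row is removable).\<close>
lemma no_removable_beta:
  assumes lam: "is_partition lam" and none: "\<not> (\<exists>y. J_removable l J lam y)"
    and x: "x \<in> beta_set 0 lam" and x_out: "x - 1 \<notin> beta_set 0 lam"
  shows "\<not> J_residue l J (x - 1)"
proof
  assume res: "J_residue l J (x - 1)"
  obtain a where a: "1 \<le> a" "x = beta 0 lam a" using x by (auto simp: mem_beta_set)
  have "beta 0 lam (Suc a) \<in> beta_set 0 lam" unfolding mem_beta_set by (intro exI[of _ "Suc a"]) simp
  moreover have "beta 0 lam (Suc a) < x" using beta_strict[OF lam a(1), of "Suc a" 0] a by simp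
  ultimately have "beta 0 lam (Suc a) < x - 1" using x_out by (cases "beta 0 lam (Suc a) = x - 1") auto
  then have gap: "lam (Suc a) \<le> lam a - 1" "1 \<le> lam a" using a unfolding beta_def by simp_all
  define mu where "mu = lam(a := lam a - 1)"
  have "is_partition mu"
    unfolding mu_def
  proof (rule partition_update[OF lam a(1) gap(1)])
    assume "2 \<le> a"
    then have "lam a \<le> lam (a - 1)" using partition_mono[OF lam, of "a - 1" a] by simp
    then show "lam a - 1 \<le> lam (a - 1)" by simp
  qed
  moreover have "young mu = young lam - {(a, lam a)}"
    using gap(2) unfolding mu_def young_def by (auto split: if_splits)
  moreover have "(a, lam a) \<in> young lam" using a gap by (auto simp: young_mem)
  ultimately have "removable lam (a, lam a)" unfolding removable_def by blast
  moreover have "content (a, lam a) = x - 1" using a unfolding content_def beta_def by simp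
  ultimately have "J_removable l J lam (a, lam a)" using res unfolding J_removable_def J_residue_def by simp
  then show False using none by blast
qed

section \<open>Hearts are classified by the fibre counts of a charge\<close>

definition fibre_count :: "(int \<Rightarrow> int) \<Rightarrow> int set \<Rightarrow> int \<Rightarrow> nat" where
  "fibre_count kap B v = card {x \<in> B. kap x = v}"

locale charge =
  fixes l :: nat and J :: "nat set" and kap :: "int \<Rightarrow> int"
  assumes flat_iff_residue: "\<And>x. J_residue l J (x - 1) \<longleftrightarrow> kap x = kap (x - 1)"
    and mono_step: "\<And>x. kap (x - 1) \<le> kap x"
    and finite_fibre: "\<And>v. finite {x. kap x = v}"
begin

lemma kap_mono:
  assumes "z \<le> w"
  shows "kap z \<le> kap w"
proof -
  have "kap z \<le> kap (z + int k)" for k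
  proof (induction k)
    case (Suc k)
    have "kap (z + int k) \<le> kap (z + int (Suc k))" using mono_step[of "z + int (Suc k)"] by simp
    then show ?case using Suc by simp
  qed simp
  from this[of "nat (w - z)"] show ?thesis using assms by simp
qed

lemma fibre_count_move:
  assumes "y \<in> B" "y - 1 \<notin> B" "kap y = kap (y - 1)"
  shows "fibre_count kap (insert (y - 1) (B - {y})) = fibre_count kap B"
proof
  fix v
  let ?S = "{x \<in> B. kap x = v}"
  have fin: "finite ?S" using finite_fibre[of v] by (rule finite_subset[rotated]) auto
  show "fibre_count kap (insert (y - 1) (B - {y})) v = fibre_count kap B v"
  proof (cases "kap y = v")
    case True
    then have "{x \<in> insert (y - 1) (B - {y}). kap x = v} = insert (y - 1) (?S - {y})"
      using assms by auto
    then have "card {x \<in> insert (y - 1) (B - {y}). kap x = v} = Suc (card (?S - {y}))"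
      using fin assms by simp
    also have "\<dots> = card ?S" using fin True assms(1) by (intro card_Suc_Diff1) auto
    finally show ?thesis unfolding fibre_count_def .
  next
    case False
    then have "{x \<in> insert (y - 1) (B - {y}). kap x = v} = ?S" using assms by auto
    then show ?thesis unfolding fibre_count_def by simp
  qed
qed

lemma heart_steps_fibre_count:
  assumes "(heart_step l J)\<^sup>*\<^sup>* lam mu" "is_partition lam"
  shows "is_partition mu \<and> fibre_count kap (beta_set 0 mu) = fibre_count kap (beta_set 0 lam)"
  using assms
proof (induction rule: rtranclp_induct)
  case (step mu nu)
  then have mu: "is_partition mu" by simp
  obtain x where nu: "is_partition nu" and x: "x \<in> beta_set 0 mu" "x - 1 \<notin> beta_set 0 mu"
    "J_residue l J (x - 1)" and moved: "beta_set 0 nu = insert (x - 1) (beta_set 0 mu - {x})"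
    using heart_step_beta[OF mu step.hyps(2)] by blast
  have "fibre_count kap (beta_set 0 nu) = fibre_count kap (beta_set 0 mu)"
    unfolding moved using fibre_count_move[OF x(1,2)] flat_iff_residue x(3) by simp
  then show ?case using nu step by simp
qed simp

definition fibre_closed :: "int set \<Rightarrow> bool" where
  "fibre_closed B \<longleftrightarrow> (\<forall>x\<in>B. kap x = kap (x - 1) \<longrightarrow> x - 1 \<in> B)"

lemma fibre_closed_if_no_removable:
  "is_partition lam \<Longrightarrow> \<not> (\<exists>y. J_removable l J lam y) \<Longrightarrow> fibre_closed (beta_set 0 lam)"
  unfolding fibre_closed_def using no_removable_beta flat_iff_residue by metis

lemma fibre_closed_below:
  assumes closed: "fibre_closed B" and x: "x \<in> B" and zx: "z \<le> x" and same: "kap z = kap x"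
  shows "z \<in> B"
proof -
  have "x - int k \<in> B" if "int k \<le> x - z" for k
    using that
  proof (induction k)
    case (Suc k)
    have "kap z \<le> kap (x - int k - 1)" using Suc.prems by (intro kap_mono) simp
    moreover have "kap (x - int k - 1) \<le> kap (x - int k)" using mono_step[of "x - int k"] .
    moreover have "kap (x - int k) \<le> kap x" by (intro kap_mono) (use Suc.prems in simp)
    ultimately have "kap (x - int k) = kap (x - int k - 1)" using same by simp
    moreover have "x - int k \<in> B" using Suc by simp
    ultimately have "x - int k - 1 \<in> B" using closed unfolding fibre_closed_def by blast
    then show ?case by (simp add: algebra_simps)
  qed (use x in simp)
  from this[of "nat (x - z)"] show ?thesis using zx by simp
qed

lemma fibre_closed_unique:
  assumes closed: "fibre_closed B" "fibre_closed B'" and counts: "fibre_count kap B = fibre_count kap B'"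
  shows "B \<subseteq> B'"
proof
  fix y assume y: "y \<in> B"
  show "y \<in> B'"
  proof (rule ccontr)
    assume y': "y \<notin> B'"
    let ?F = "{x. kap x = kap y}"
    have fin: "finite ?F" by (rule finite_fibre)
    have "{x \<in> B'. kap x = kap y} \<subseteq> {x \<in> ?F. x < y}"
    proof
      fix z assume z: "z \<in> {x \<in> B'. kap x = kap y}"
      then have "\<not> y \<le> z" using fibre_closed_below[OF closed(2), of z y] y' by auto
      then show "z \<in> {x \<in> ?F. x < y}" using z by auto
    qed
    then have "card {x \<in> B'. kap x = kap y} \<le> card {x \<in> ?F. x < y}"
      using fin by (intro card_mono) auto
    also have "\<dots> < card {x \<in> ?F. x \<le> y}"
      using fin by (intro psubset_card_mono) auto
    also have "\<dots> \<le> card {x \<in> B. kap x = kap y}"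
      using fibre_closed_below[OF closed(1) y] fin by (intro card_mono) (auto intro: finite_subset[OF _ fin])
    finally show False using counts unfolding fibre_count_def by (metis less_irrefl)
  qed
qed

lemma heart_props:
  assumes lam: "is_partition lam"
  shows "is_partition (heart l J lam) \<and> fibre_count kap (beta_set 0 (heart l J lam)) = fibre_count kap (beta_set 0 lam)
    \<and> fibre_closed (beta_set 0 (heart l J lam))"
proof -
  have unique: "mu1 = mu2"
    if "(heart_step l J)\<^sup>*\<^sup>* lam mu1" "\<not> (\<exists>y. J_removable l J mu1 y)"
      "(heart_step l J)\<^sup>*\<^sup>* lam mu2" "\<not> (\<exists>y. J_removable l J mu2 y)" for mu1 mu2
  proof -
    have p1: "is_partition mu1" "fibre_count kap (beta_set 0 mu1) = fibre_count kap (beta_set 0 lam)"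
      and p2: "is_partition mu2" "fibre_count kap (beta_set 0 mu2) = fibre_count kap (beta_set 0 lam)"
      using heart_steps_fibre_count[OF that(1) lam] heart_steps_fibre_count[OF that(3) lam] by auto
    have "fibre_closed (beta_set 0 mu1)" "fibre_closed (beta_set 0 mu2)"
      using fibre_closed_if_no_removable p1(1) p2(1) that(2,4) by auto
    then have "beta_set 0 mu1 = beta_set 0 mu2"
      using fibre_closed_unique p1(2) p2(2) by (metis subset_antisym)
    then show ?thesis using beta_set_inj p1(1) p2(1) by blast
  qed
  have "\<exists>!mu. (heart_step l J)\<^sup>*\<^sup>* lam mu \<and> \<not> (\<exists>y. J_removable l J mu y)"
    using heart_exists[OF lam] unique by blast
  then have "(heart_step l J)\<^sup>*\<^sup>* lam (heart l J lam) \<and> \<not> (\<exists>x. J_removable l J (heart l J lam) x)"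
    unfolding heart_def by (rule theI')
  then show ?thesis using heart_steps_fibre_count[OF _ lam] fibre_closed_if_no_removable by blast
qed

lemma heart_eq_iff_fibre_count:
  assumes "is_partition lam" "is_partition mu"
  shows "heart l J lam = heart l J mu \<longleftrightarrow> fibre_count kap (beta_set 0 lam) = fibre_count kap (beta_set 0 mu)"
proof
  assume "heart l J lam = heart l J mu"
  then show "fibre_count kap (beta_set 0 lam) = fibre_count kap (beta_set 0 mu)"
    using heart_props[OF assms(1)] heart_props[OF assms(2)] by metis
next
  assume "fibre_count kap (beta_set 0 lam) = fibre_count kap (beta_set 0 mu)"
  then have "beta_set 0 (heart l J lam) = beta_set 0 (heart l J mu)"
    using heart_props[OF assms(1)] heart_props[OF assms(2)] fibre_closed_unique by (metis subset_antisym)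
  then show "heart l J lam = heart l J mu"
    using beta_set_inj heart_props[OF assms(1)] heart_props[OF assms(2)] by blast
qed

end

section \<open>Interleaving beta sets: the map chi\<close>

lemma divmod_eq:
  fixes L k q :: int
  assumes "0 \<le> q" "q < L"
  shows "(L * k + q) div L = k \<and> (L * k + q) mod L = q"
  using assms by (simp add: add.commute)

lemma int_decompose:
  assumes "0 < l"
  shows "x = int l * ((x - 1) div int l) + int (nat ((x - 1) mod int l)) + 1"
    and "nat ((x - 1) mod int l) < l"
  using assms by (simp_all add: nat_less_iff)

lemma encode_inj:
  assumes "q < l" "q' < l" "int l * c + int q = int l * c' + int q'"
  shows "c = c' \<and> q = q'"
proof -
  have d: "(int l * c + int q) div int l = c" "(int l * c + int q) mod int l = int q"
    using divmod_eq[of "int q" "int l" c] assms(1) by auto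
  have d': "(int l * c' + int q') div int l = c'" "(int l * c' + int q') mod int l = int q'"
    using divmod_eq[of "int q'" "int l" c'] assms(2) by auto
  show ?thesis using d d' assms(3) by (metis of_nat_eq_iff)
qed

definition chi :: "nat \<Rightarrow> (nat \<Rightarrow> int set) \<Rightarrow> int set" where
  "chi l B = {int l * (c - 1) + int q + 1 | q c. q < l \<and> c \<in> B q}"

lemma chi_mem:
  assumes q: "q < l"
  shows "int l * (c - 1) + int q + 1 \<in> chi l B \<longleftrightarrow> c \<in> B q"
proof
  assume "int l * (c - 1) + int q + 1 \<in> chi l B"
  then obtain q' c' where c': "q' < l" "c' \<in> B q'" "int l * (c - 1) + int q = int l * (c' - 1) + int q'"
    unfolding chi_def by auto
  then have "c - 1 = c' - 1 \<and> q = q'" using encode_inj[OF q] by blast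
  then show "c \<in> B q" using c' by simp
qed (use q in \<open>auto simp: chi_def\<close>)

lemma chi_cong: "(\<And>q. q < l \<Longrightarrow> B q = B' q) \<Longrightarrow> chi l B = chi l B'"
  unfolding chi_def by auto

lemma chi_below:
  assumes l: "0 < l" and low: "\<And>q. q < l \<Longrightarrow> {..a} \<subseteq> B q"
  shows "{..int l * a} \<subseteq> chi l B"
proof
  fix x assume "x \<in> {..int l * a}"
  define c q where "c = (x - 1) div int l" and "q = nat ((x - 1) mod int l)"
  have x: "x = int l * (c + 1 - 1) + int q + 1" and q: "q < l"
    unfolding c_def q_def using int_decompose[OF l, of x] by simp_all
  have "int l * c < int l * a" using x \<open>x \<in> {..int l * a}\<close> by simp
  then have "c + 1 \<in> B q" using low[OF q] l by (auto simp: mult_less_cancel_left)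
  then show "x \<in> chi l B" unfolding x using chi_mem[OF q] by blast
qed

lemma chi_above:
  "chi l B \<inter> {int l * a<..} = (\<Union>q<l. (\<lambda>c. int l * (c - 1) + int q + 1) ` (B q \<inter> {a<..}))"
proof (intro equalityI subsetI)
  fix x assume "x \<in> chi l B \<inter> {int l * a<..}"
  then obtain q c where qc: "q < l" "c \<in> B q" "x = int l * (c - 1) + int q + 1" "int l * a < x"
    unfolding chi_def by auto
  have "a < c"
  proof (rule ccontr)
    assume "\<not> a < c"
    then have "int l * (c - 1) \<le> int l * (a - 1)" by (intro mult_left_mono) auto
    moreover have "int l * (a - 1) + int l = int l * a" by (simp add: algebra_simps)
    moreover have "int q + 1 \<le> int l" using qc(1) by simp
    ultimately show False using qc(3,4) by linarith
  qed
  then show "x \<in> (\<Union>q<l. (\<lambda>c. int l * (c - 1) + int q + 1) ` (B q \<inter> {a<..}))" using qc by auto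
next
  fix x assume "x \<in> (\<Union>q<l. (\<lambda>c. int l * (c - 1) + int q + 1) ` (B q \<inter> {a<..}))"
  then obtain q c where qc: "q < l" "c \<in> B q" "a < c" "x = int l * (c - 1) + int q + 1" by auto
  have "int l * a \<le> int l * (c - 1)" using qc(3) by (intro mult_left_mono) auto
  then have "int l * a < x" using qc(4) by linarith
  moreover have "x \<in> chi l B" using qc chi_mem by blast
  ultimately show "x \<in> chi l B \<inter> {int l * a<..}" by simp
qed

lemma chi_beta_like:
  assumes l: "0 < l" and like: "\<And>q. q < l \<Longrightarrow> beta_like (s q) (B q) a"
  shows "beta_like (\<Sum>q<l. s q) (chi l B) (int l * a)"
proof -
  let ?part = "\<lambda>q. (\<lambda>c. int l * (c - 1) + int q + 1) ` (B q \<inter> {a<..})"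
  have fin: "finite (B q \<inter> {a<..})" if "q < l" for q using like[OF that] unfolding beta_like_def by simp
  have disj: "?part q \<inter> ?part q' = {}" if "q < l" "q' < l" "q \<noteq> q'" for q q'
  proof (rule ccontr)
    assume "?part q \<inter> ?part q' \<noteq> {}"
    then obtain c c' where "int l * (c - 1) + int q = int l * (c' - 1) + int q'" by auto
    then show False using encode_inj[OF that(1,2)] that(3) by blast
  qed
  have inj: "inj_on (\<lambda>c. int l * (c - 1) + int q + 1) S" for q S using l by (auto simp: inj_on_def)
  have "card (chi l B \<inter> {int l * a<..}) = (\<Sum>q<l. card (?part q))"
    unfolding chi_above by (rule card_UN_disjoint) (use fin disj in auto)
  also have "\<dots> = (\<Sum>q<l. card (B q \<inter> {a<..}))" using inj by (simp add: card_image)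
  finally have "int (card (chi l B \<inter> {int l * a<..})) = (\<Sum>q<l. s q - a)"
    using like unfolding beta_like_def by simp
  also have "\<dots> = (\<Sum>q<l. s q) - int l * a" by (simp add: sum_subtractf)
  finally have "int (card (chi l B \<inter> {int l * a<..})) = (\<Sum>q<l. s q) - int l * a" .
  moreover have "{..int l * a} \<subseteq> chi l B"
    using chi_below[OF l] like unfolding beta_like_def by blast
  moreover have "finite (chi l B \<inter> {int l * a<..})" unfolding chi_above using fin by blast
  ultimately show ?thesis unfolding beta_like_def by blast
qed

lemma tau_beta_set:
  assumes l: "0 < l" and parts: "\<forall>q<l. is_partition (lams ! q)"
  shows "is_partition (tau l s lams)
    \<and> beta_set (\<Sum>q<l. s q) (tau l s lams) = chi l (\<lambda>q. beta_set (s q) (lams ! q))"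
proof -
  let ?B = "\<lambda>q. beta_set (s q) (lams ! q)"
  have "\<exists>Aq. \<forall>a\<le>Aq. beta_like (s q) (?B q) a" if "q < l" for q
    using beta_set_beta_like parts that by blast
  then obtain A where A: "\<And>q a. q < l \<Longrightarrow> a \<le> A q \<Longrightarrow> beta_like (s q) (?B q) a" by metis
  define a where "a = Min (A ` {..<l})"
  have "a \<le> A q" if "q < l" for q unfolding a_def using that by simp
  then have "beta_like (\<Sum>q<l. s q) (chi l ?B) (int l * a)" using A by (intro chi_beta_like[OF l]) blast
  then have "\<exists>mu. is_partition mu \<and> beta_set (\<Sum>q<l. s q) mu = chi l ?B" by (rule beta_like_beta_set)
  then have "\<exists>!mu. is_partition mu \<and> beta_set (\<Sum>q<l. s q) mu = chi l ?B"
    using beta_set_inj by blast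
  moreover have "tau l s lams = (THE mu. is_partition mu \<and> beta_set (\<Sum>q<l. s q) mu = chi l ?B)"
    unfolding tau_def chi_def by simp
  ultimately show ?thesis by (metis (mono_tags, lifting) theI')
qed

lemma sum_alpha: "i < l \<Longrightarrow> (\<Sum>j<l. alpha l i j) = 0"
  unfolding alpha_def by (simp add: sum_subtractf sum.delta)

lemma sum_wact: "set ws \<subseteq> {1..<l} \<Longrightarrow> (\<Sum>j<l. wact l ws th j) = (\<Sum>j<l. th j)"
proof (induction ws)
  case (Cons i ws)
  have "(\<Sum>j<l. sact l i th' j) = (\<Sum>j<l. th' j) - th' i * (\<Sum>j<l. alpha l i j)" for th'
    unfolding sact_def by (simp add: sum_subtractf sum_distrib_left)
  then show ?case using Cons sum_alpha[of i l] by (simp add: wact_def)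
qed (simp add: wact_def)

text \<open>The simple reflections have integer coefficients, so they preserve d-integrality.\<close>
lemma wact_int:
  assumes "set ws \<subseteq> {1..<l}" "\<forall>j<l. of_nat d * th j \<in> \<int>"
  shows "\<forall>j<l. of_nat d * wact l ws th j \<in> \<int>"
  using assms(1)
proof (induction ws)
  case (Cons i ws)
  have "i < l" using Cons.prems by auto
  have "of_nat d * sact l i (wact l ws th) j \<in> \<int>" if "j < l" for j
  proof -
    have "of_nat d * sact l i (wact l ws th) j
        = of_nat d * wact l ws th j - (of_nat d * wact l ws th i) * alpha l i j"
      unfolding sact_def by (simp add: algebra_simps)
    moreover have "alpha l i j \<in> \<int>" unfolding alpha_def by auto
    moreover have "of_nat d * wact l ws th j \<in> \<int>" "of_nat d * wact l ws th i \<in> \<int>"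
      using Cons.IH Cons.prems \<open>i < l\<close> that by auto
    ultimately show ?thesis by (metis Ints_diff Ints_mult)
  qed
  then show ?case by (simp add: wact_def)
qed (use assms(2) in \<open>simp add: wact_def\<close>)

lemma sum_phi:
  assumes "0 < l"
  shows "(\<Sum>j<l. phi l r j) = 0"
proof -
  have shift: "((j + 1) mod l + l - 1) mod l = j" if "j < l" for j
  proof (cases "Suc j < l")
    case False
    then have "Suc j = l" using that by simp
    then show ?thesis by simp
  qed simp
  have "(\<Sum>j<l. r ((j + l - 1) mod l)) = (\<Sum>j<l. r j)"
    by (rule sum.reindex_bij_witness[where i = "\<lambda>j. (j + 1) mod l" and j = "\<lambda>j. (j + l - 1) mod l"])
       (use assms shift in \<open>auto simp: mod_add_left_eq mod_Suc_eq\<close>)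
  then show ?thesis unfolding phi_def by (simp add: sum_subtractf flip: of_int_sum)
qed

lemma sum_theta: "0 < l \<Longrightarrow> (\<Sum>j<l. theta l H j) = 1"
proof -
  assume "0 < l"
  then have "{..<l} = insert 0 {1..<l}" by auto
  then show ?thesis unfolding theta_def by simp
qed

lemma swp_bij: "bij (swp a b)"
proof -
  have "swp a b \<circ> swp a b = id" by (auto simp: swp_def)
  then show ?thesis using o_bij by blast
qed

lemma wperm_props:
  assumes "set ws \<subseteq> {1..<l}"
  shows "bij (wperm ws) \<and> (\<forall>x\<ge>l. wperm ws x = x)"
  using assms
proof (induction ws)
  case Nil then show ?case by (simp add: wperm_def bij_id[unfolded id_def])
next
  case (Cons i ws)
  have e: "wperm (i # ws) = swp (i - 1) i \<circ> wperm ws" by (simp add: wperm_def)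
  have "bij (wperm (i # ws))" using e Cons swp_bij by (simp add: bij_comp)
  moreover have "\<forall>x\<ge>l. wperm (i # ws) x = x" using e Cons by (auto simp: swp_def)
  ultimately show ?case by simp
qed

lemma inv_wperm_lt:
  assumes "set ws \<subseteq> {1..<l}" "p < l"
  shows "inv (wperm ws) p < l"
proof (rule ccontr)
  have b: "bij (wperm ws)" "\<forall>x\<ge>l. wperm ws x = x" using wperm_props[OF assms(1)] by auto
  assume "\<not> inv (wperm ws) p < l"
  then have "wperm ws (inv (wperm ws) p) = inv (wperm ws) p" using b by auto
  moreover have "wperm ws (inv (wperm ws) p) = p" using b(1) by (simp add: bij_is_surj surj_f_inv_f)
  ultimately show False using assms(2) \<open>\<not> inv (wperm ws) p < l\<close> by simp
qed

section \<open>The charge attached to epsilon\<close>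

lemma mult_between_eq_zero:
  fixes d n :: int
  assumes "0 < d" "- d < d * n" "d * n < d"
  shows "n = 0"
proof -
  have "d * (- 1) < d * n" "d * n < d * 1" using assms by simp_all
  then have "- 1 < n" "n < 1" using assms(1) mult_less_cancel_left_pos by blast+
  then show ?thesis by simp
qed

locale eps_setup =
  fixes l d :: nat and H :: "nat \<Rightarrow> rat" and r :: "nat \<Rightarrow> int" and ws :: "nat list"
  assumes l_pos: "0 < l" and d_pos: "0 < d"
    and H_int: "\<forall>i\<in>{1..<l}. of_nat d * H i \<in> \<int>"
    and r_sum: "(\<Sum>q<l. r q) = 0"
    and ws_range: "set ws \<subseteq> {1..<l}"
    and eps_range: "\<forall>i<l. 0 \<le> eps l H r ws i \<and> eps l H r ws i \<le> 1"
begin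

abbreviation "E \<equiv> eps l H r ws"

lemma sum_eps: "(\<Sum>j<l. E j) = 1"
  unfolding eps_def using sum_phi[OF l_pos, of r] sum_wact[OF ws_range, of "theta l H"] sum_theta[OF l_pos, of H]
  by (simp add: sum.distrib)

lemma d_eps_int: "j < l \<Longrightarrow> of_nat d * E j \<in> \<int>"
proof -
  assume j: "j < l"
  have "of_nat d * theta l H i \<in> \<int>" if "i < l" for i
  proof (cases "i = 0")
    case True
    have "of_nat d * theta l H i = of_nat d - (\<Sum>i\<in>{1..<l}. of_nat d * H i)"
      using True unfolding theta_def by (simp add: algebra_simps sum_distrib_left)
    moreover have "(\<Sum>i\<in>{1..<l}. of_nat d * H i) \<in> \<int>" using H_int by (intro Ints_sum) auto
    ultimately show ?thesis by (metis Ints_diff Ints_of_nat)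
  qed (use H_int that in \<open>auto simp: theta_def\<close>)
  then have "of_nat d * wact l ws (theta l H) j \<in> \<int>" using wact_int[OF ws_range] j by blast
  moreover have "of_nat d * phi l r j \<in> \<int>" unfolding phi_def by simp
  ultimately show ?thesis unfolding eps_def by (metis Ints_add distrib_left)
qed

definition msum :: "nat \<Rightarrow> rat" where "msum q = (\<Sum>i\<le>q. of_nat d * E i)"
definition m :: "nat \<Rightarrow> int" where "m q = \<lfloor>msum q\<rfloor>"

lemma m_eq: "q < l \<Longrightarrow> of_int (m q) = msum q"
proof -
  assume "q < l"
  then have "msum q \<in> \<int>" unfolding msum_def using d_eps_int by (intro Ints_sum) auto
  then show ?thesis unfolding m_def by (metis Ints_cases floor_of_int)
qed

lemma m_bounds: "q < l \<Longrightarrow> 0 \<le> m q \<and> m q \<le> int d"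
proof -
  assume q: "q < l"
  have "0 \<le> msum q" unfolding msum_def using eps_range q by (intro sum_nonneg) auto
  moreover have "msum q \<le> (\<Sum>i<l. of_nat d * E i)"
    unfolding msum_def by (rule sum_mono2) (use q eps_range in auto)
  moreover have "(\<Sum>i<l. of_nat d * E i) = of_nat d" using sum_eps by (simp flip: sum_distrib_left)
  ultimately have "(0::rat) \<le> of_int (m q) \<and> of_int (m q) \<le> (of_int (int d) :: rat)"
    using m_eq[OF q] by simp
  then show ?thesis by linarith
qed

lemma m_last: "m (l - 1) = int d"
proof -
  have "{..l - 1} = {..<l}" using l_pos by auto
  then have "msum (l - 1) = of_nat d" unfolding msum_def using sum_eps by (simp flip: sum_distrib_left)
  then show ?thesis using m_eq[of "l - 1"] l_pos by simp
qed

lemma m_step: "Suc q < l \<Longrightarrow> of_int (m (Suc q)) - of_int (m q) = of_nat d * E (Suc q)"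
  using m_eq[of q] m_eq[of "Suc q"] unfolding msum_def by simp

definition kap :: "int \<Rightarrow> int" where
  "kap x = int d * ((x - 1) div int l) + m (nat ((x - 1) mod int l))"

lemma kap_code: "q < l \<Longrightarrow> kap (int l * c + int q + 1) = int d * c + m q"
  unfolding kap_def using divmod_eq[of "int q" "int l" c] by simp

lemmas decompose = int_decompose(1)[OF l_pos] and residue_lt = int_decompose(2)[OF l_pos]

lemma kap_increment: "of_int (kap x) - of_int (kap (x - 1)) = of_nat d * E (nat ((x - 1) mod int l))"
proof -
  define c q where "c = (x - 1) div int l" and "q = nat ((x - 1) mod int l)"
  have x: "x = int l * c + int q + 1" and q: "q < l" unfolding c_def q_def by (rule decompose, rule residue_lt)
  show ?thesis
  proof (cases q)
    case 0
    have e: "x - 1 = int l * (c - 1) + int (l - 1) + 1" using x 0 l_pos by (simp add: algebra_simps of_nat_diff)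
    have "kap (x - 1) = int d * c"
      unfolding e using kap_code[of "l - 1" "c - 1"] m_last l_pos by (simp add: algebra_simps)
    then show ?thesis using kap_code[OF q, of c] x 0 m_eq[OF q] unfolding q_def[symmetric] msum_def by simp
  next
    case (Suc p)
    have e: "x - 1 = int l * c + int p + 1" using x Suc by simp
    have "kap (x - 1) = int d * c + m p" unfolding e using kap_code[of p c] q Suc by simp
    then show ?thesis using kap_code[OF q, of c] x m_step[of p] q Suc unfolding q_def[symmetric] by simp
  qed
qed

lemma kap_finite_fibre: "finite {x. kap x = v}"
proof -
  let ?enc = "\<lambda>(c, q). int l * c + int q + 1"
  have "{x. kap x = v} \<subseteq> ?enc ` ({v div int d - 1 .. v div int d} \<times> {..<l})"
  proof
    fix x assume "x \<in> {x. kap x = v}"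
    define c q where "c = (x - 1) div int l" and "q = nat ((x - 1) mod int l)"
    have x: "x = int l * c + int q + 1" and q: "q < l" unfolding c_def q_def by (rule decompose, rule residue_lt)
    then have v: "v = int d * c + m q" using kap_code \<open>x \<in> {x. kap x = v}\<close> by simp
    have "c \<le> v div int d" using zdiv_mono1[of "int d * c" v "int d"] v m_bounds[OF q] d_pos by simp
    moreover have "v div int d \<le> c + 1"
      using zdiv_mono1[of v "int d * (c + 1)" "int d"] v m_bounds[OF q] d_pos by (simp add: algebra_simps)
    ultimately show "x \<in> ?enc ` ({v div int d - 1 .. v div int d} \<times> {..<l})"
      using x q by (intro image_eqI[of _ _ "(c, q)"]) auto
  qed
  then show ?thesis by (rule finite_subset) simp
qed

lemma kap_charge: "charge l (Jset l H r ws) kap"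
proof
  fix x
  define q where "q = nat ((x - 1) mod int l)"
  have q: "q < l" "(x - 1) mod int l = int q" unfolding q_def using residue_lt l_pos by auto
  have "0 \<le> of_nat d * E q" using eps_range q by simp
  then show "kap (x - 1) \<le> kap x" using kap_increment[of x] unfolding q_def[symmetric] by simp
  have "J_residue l (Jset l H r ws) (x - 1) \<longleftrightarrow> E q = 0"
    unfolding J_residue_def Jset_def using q by auto
  also have "\<dots> \<longleftrightarrow> of_nat d * E q = 0" using d_pos by simp
  also have "\<dots> \<longleftrightarrow> (of_int (kap x) :: rat) - of_int (kap (x - 1)) = 0"
    using kap_increment[of x] unfolding q_def[symmetric] by simp
  also have "\<dots> \<longleftrightarrow> kap x = kap (x - 1)" by simp
  finally show "J_residue l (Jset l H r ws) (x - 1) \<longleftrightarrow> kap x = kap (x - 1)" .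
qed (rule kap_finite_fibre)

lemma Iset_eq: "Iset l d H r ws t = {p. p < l \<and> m p = int t}"
proof -
  have "(\<Sum>i\<le>p. of_nat d * E i) = of_nat t \<longleftrightarrow> m p = int t" if "p < l" for p
    using m_eq[OF that] unfolding msum_def by (metis of_int_eq_iff of_int_of_nat_eq)
  then show ?thesis unfolding Iset_def by auto
qed

lemma fibre_count_chi:
  "fibre_count kap (chi l B) v = card {(q, c). q < l \<and> c \<in> B q \<and> int d * (c - 1) + m q = v}"
proof -
  let ?enc = "\<lambda>(q, c). int l * (c - 1) + int q + 1"
  let ?P = "{(q, c). q < l \<and> c \<in> B q \<and> int d * (c - 1) + m q = v}"
  have "{z \<in> chi l B. kap z = v} = ?enc ` ?P"
  proof (intro equalityI subsetI)
    fix z assume "z \<in> {z \<in> chi l B. kap z = v}"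
    then obtain q c where "q < l" "c \<in> B q" "z = int l * (c - 1) + int q + 1" "kap z = v"
      unfolding chi_def by auto
    then show "z \<in> ?enc ` ?P" using kap_code[of q "c - 1"] by (intro image_eqI[of _ _ "(q, c)"]) auto
  next
    fix z assume "z \<in> ?enc ` ?P"
    then obtain q c where "q < l" "c \<in> B q" "int d * (c - 1) + m q = v" "z = int l * (c - 1) + int q + 1"
      by auto
    then show "z \<in> {z \<in> chi l B. kap z = v}" using kap_code[of q "c - 1"] chi_mem by auto
  qed
  moreover have "inj_on ?enc ?P"
  proof (rule inj_onI, clarify)
    fix q c q' c'
    assume "q < l" "q' < l" "int l * (c - 1) + int q + 1 = int l * (c' - 1) + int q' + 1"
    then show "q = q' \<and> c = c'" using encode_inj[of q l q' "c - 1" "c' - 1"] by simp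
  qed
  ultimately show ?thesis unfolding fibre_count_def by (simp add: card_image)
qed

lemma Cmult_mid:
  assumes t: "1 \<le> t" "t \<le> d - 1"
  shows "Cmult l d H r ws t lam x = fibre_count kap (chi l (Cp ws r lam)) (int d * (x - 1) + int t)"
proof -
  let ?S = "{p \<in> Iset l d H r ws t. x \<in> Cp ws r lam p}"
  have "{(q, c). q < l \<and> c \<in> Cp ws r lam q \<and> int d * (c - 1) + m q = int d * (x - 1) + int t}
      = (\<lambda>q. (q, x)) ` ?S"
  proof (intro equalityI subsetI)
    fix qc assume "qc \<in> {(q, c). q < l \<and> c \<in> Cp ws r lam q \<and> int d * (c - 1) + m q = int d * (x - 1) + int t}"
    then obtain q c where qc: "qc = (q, c)" "q < l" "c \<in> Cp ws r lam q"
      and v: "int d * (c - x) = int t - m q" by (auto simp: algebra_simps)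
    have "c - x = 0" using mult_between_eq_zero[of "int d" "c - x"] v m_bounds[OF qc(2)] t d_pos by linarith
    then show "qc \<in> (\<lambda>q. (q, x)) ` ?S" using qc v Iset_eq by auto
  qed (auto simp: Iset_eq)
  moreover have "inj_on (\<lambda>q. (q, x)) ?S" by (auto simp: inj_on_def)
  ultimately show ?thesis using t unfolding fibre_count_chi Cmult_def by (simp add: card_image)
qed

text \<open>The fibre over d*x counts the copies of x in C_[d] and the copies of x + 1 in C_[0],
  i.e. the copies of x in the multiset C_[0] = C_[d].\<close>
lemma Cmult_edge:
  assumes t: "\<not> (1 \<le> t \<and> t \<le> d - 1)"
  shows "Cmult l d H r ws t lam x = fibre_count kap (chi l (Cp ws r lam)) (int d * x)"
proof -
  let ?S0 = "{p \<in> Iset l d H r ws 0. x + 1 \<in> Cp ws r lam p}"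
  let ?Sd = "{p \<in> Iset l d H r ws d. x \<in> Cp ws r lam p}"
  have "{(q, c). q < l \<and> c \<in> Cp ws r lam q \<and> int d * (c - 1) + m q = int d * x}
      = (\<lambda>q. (q, x)) ` ?Sd \<union> (\<lambda>q. (q, x + 1)) ` ?S0"
  proof (intro equalityI subsetI)
    fix qc assume "qc \<in> {(q, c). q < l \<and> c \<in> Cp ws r lam q \<and> int d * (c - 1) + m q = int d * x}"
    then obtain q c where qc: "qc = (q, c)" "q < l" "c \<in> Cp ws r lam q"
      and v: "int d * (x - c) + int d = m q" by (auto simp: algebra_simps)
    show "qc \<in> (\<lambda>q. (q, x)) ` ?Sd \<union> (\<lambda>q. (q, x + 1)) ` ?S0"
    proof (cases "m q = int d")
      case True
      then have "c = x" using v d_pos by simp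
      then show ?thesis using qc True Iset_eq by auto
    next
      case False
      have "int d * (x - c + 1) = m q" using v by (simp add: algebra_simps)
      then have "x - c + 1 = 0"
        using mult_between_eq_zero[of "int d" "x - c + 1"] m_bounds[OF qc(2)] False d_pos by simp
      then have "c = x + 1" by simp
      moreover from this have "m q = 0" using v by simp
      ultimately show ?thesis using qc Iset_eq by auto
    qed
  qed (auto simp: Iset_eq algebra_simps)
  moreover have "card ((\<lambda>q. (q, x)) ` ?Sd \<union> (\<lambda>q. (q, x + 1)) ` ?S0) = card ?Sd + card ?S0"
    by (subst card_Un_disjoint) (auto simp: Iset_def card_image inj_on_def)
  moreover have "Cmult l d H r ws t lam x = card ?S0 + card ?Sd" unfolding Cmult_def using t by (simp only: if_False)
  ultimately show ?thesis unfolding fibre_count_chi by simp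
qed

lemma Cmult_eq_iff_fibre_count:
  "(\<forall>t\<in>{0..d}. Cmult l d H r ws t lam = Cmult l d H r ws t mu)
    \<longleftrightarrow> fibre_count kap (chi l (Cp ws r lam)) = fibre_count kap (chi l (Cp ws r mu))"
proof
  assume counts: "fibre_count kap (chi l (Cp ws r lam)) = fibre_count kap (chi l (Cp ws r mu))"
  show "\<forall>t\<in>{0..d}. Cmult l d H r ws t lam = Cmult l d H r ws t mu"
  proof (intro ballI ext)
    fix t x
    show "Cmult l d H r ws t lam x = Cmult l d H r ws t mu x"
      using Cmult_mid Cmult_edge counts by (cases "1 \<le> t \<and> t \<le> d - 1") simp_all
  qed
next
  assume C: "\<forall>t\<in>{0..d}. Cmult l d H r ws t lam = Cmult l d H r ws t mu"
  show "fibre_count kap (chi l (Cp ws r lam)) = fibre_count kap (chi l (Cp ws r mu))"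
  proof
    fix v
    define x t where "x = (v - 1) div int d + 1" and "t = (v - 1) mod int d + 1"
    have v: "v = int d * (x - 1) + t" unfolding x_def t_def by simp
    have "0 < int d" using d_pos by simp
    then have t: "1 \<le> t" "t \<le> int d" unfolding t_def
      using pos_mod_sign[of "int d" "v - 1"] pos_mod_bound[of "int d" "v - 1"] by linarith+
    show "fibre_count kap (chi l (Cp ws r lam)) v = fibre_count kap (chi l (Cp ws r mu)) v"
    proof (cases "t < int d")
      case True
      then have s: "1 \<le> nat t" "nat t \<le> d - 1" "int (nat t) = t" using t by auto
      then have "Cmult l d H r ws (nat t) lam x = Cmult l d H r ws (nat t) mu x" using C by auto
      then show ?thesis using Cmult_mid[OF s(1,2)] v s(3) by simp
    next
      case False
      then have "v = int d * x" using t v by (simp add: algebra_simps)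
      moreover have "\<not> (1 \<le> d \<and> d \<le> d - 1)" using d_pos by simp
      moreover have "Cmult l d H r ws d lam x = Cmult l d H r ws d mu x" using C by auto
      ultimately show ?thesis using Cmult_edge[of d] by simp
    qed
  qed
qed

lemma tau_twisted:
  assumes lam: "lam \<in> multipartitions l n"
  shows "is_partition (tau l r (wmp ws lam)) \<and> beta_set 0 (tau l r (wmp ws lam)) = chi l (Cp ws r lam)"
proof -
  have len: "length lam = l" using lam unfolding multipartitions_def by simp
  have comp: "wmp ws lam ! q = lam ! inv (wperm ws) q" if "q < l" for q
    unfolding wmp_def using len that by simp
  have "is_partition (wmp ws lam ! q)" if "q < l" for q
    using lam inv_wperm_lt[OF ws_range that] unfolding comp[OF that] multipartitions_def by auto
  then have "is_partition (tau l r (wmp ws lam))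
      \<and> beta_set 0 (tau l r (wmp ws lam)) = chi l (\<lambda>q. beta_set (r q) (wmp ws lam ! q))"
    using tau_beta_set[OF l_pos, of "wmp ws lam" r] r_sum by simp
  moreover have "chi l (\<lambda>q. beta_set (r q) (wmp ws lam ! q)) = chi l (Cp ws r lam)"
    by (rule chi_cong) (simp add: comp Cp_def)
  ultimately show ?thesis by simp
qed

end

theorem corollary3p11:
  fixes l n d :: nat and H :: "nat \<Rightarrow> rat" and r :: "nat \<Rightarrow> int" and ws :: "nat list"
    and lam mu :: "(nat \<Rightarrow> nat) list"
  assumes "0 < l" and "0 < n" and "0 < d"
    and "\<forall>i\<in>{1..<l}. of_nat d * H i \<in> \<int>"
    and "(\<Sum>q<l. r q) = 0"
    and "set ws \<subseteq> {1..<l}"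
    and "\<forall>i<l. 0 \<le> eps l H r ws i \<and> eps l H r ws i \<le> 1"
    and "lam \<in> multipartitions l n" and "mu \<in> multipartitions l n"
  shows "heart l (Jset l H r ws) (tau l r (wmp ws lam)) = heart l (Jset l H r ws) (tau l r (wmp ws mu))
     \<longleftrightarrow> (\<forall>t\<in>{0..d}. Cmult l d H r ws t lam = Cmult l d H r ws t mu)"
proof -
  interpret eps_setup l d H r ws
    by unfold_locales (use assms in auto)
  interpret charge l "Jset l H r ws" kap
    by (rule kap_charge)
  have lam: "is_partition (tau l r (wmp ws lam))" "beta_set 0 (tau l r (wmp ws lam)) = chi l (Cp ws r lam)"
    using tau_twisted[OF assms(8)] by auto
  have mu: "is_partition (tau l r (wmp ws mu))" "beta_set 0 (tau l r (wmp ws mu)) = chi l (Cp ws r mu)"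
    using tau_twisted[OF assms(9)] by auto
  have "heart l (Jset l H r ws) (tau l r (wmp ws lam)) = heart l (Jset l H r ws) (tau l r (wmp ws mu))
      \<longleftrightarrow> fibre_count kap (chi l (Cp ws r lam)) = fibre_count kap (chi l (Cp ws r mu))"
    using heart_eq_iff_fibre_count[OF lam(1) mu(1)] lam(2) mu(2) by simp
  also have "\<dots> \<longleftrightarrow> (\<forall>t\<in>{0..d}. Cmult l d H r ws t lam = Cmult l d H r ws t mu)"
    by (rule Cmult_eq_iff_fibre_count[symmetric])
  finally show ?thesis .
qed

end
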